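(* Let $g=\{g_n\}_{n=1}^\infty$ be a sequence of positive numbers such that $(-\Delta_0 g)_n:=2g_n-g_{n-1}-g_{n+1}\ge0$ for all $n\in\mathbb{N}$ (with $g_0:=0$), and set $w_n:=(-\Delta_0g)_n/g_n$. Then for every finitely supported sequence $u=\{u_n\}_{n=0}^\infty$ with $u_0=0$, \[ \sum_{n=1}^\infty|u_n-u_{n-1}|^2=\sum_{n=1}^\infty w_n|u_n|^2+\sum_{n=2}^\infty\Big|\sqrt{\tfrac{g_{n-1}}{g_n}}\,u_n-\sqrt{\tfrac{g_n}{g_{n-1}}}\,u_{n-1}\Big|^2. \] In particular $\sum_{n=1}^\infty w_n|u_n|^2\le\sum_{n=1}^\infty|u_n-u_{n-1}|^2$ for all such $u$. Moreover, if there exist finitely supported sequences $\xi^N=\{\xi^N_n\}_{n=1}^\infty$, $N\in\mathbb{N}$, with $\xi^N\le\xi^{N+1}$ pointwise, $\xi^N_n\to1$ as $N\to\infty$ for every $n$, and \[ \lim_{N\to\infty}\sum_{n=2}^\infty g_ng_{n-1}|\xi^N_n-\xi^N_{n-1}|^2=0, \] then $w$ is an optimal Hardy weight.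
   Context: $\mathbb{N}=\{1,2,\dots\}$. A Hardy weight (for the discrete Dirichlet Laplacian) is a sequence $\tilde w=\{\tilde w_n\}_{n\ge1}$ with $\tilde w_n\ge0$ such that $\sum_{n\ge1}\tilde w_n|u_n|^2\le\sum_{n\ge1}|u_n-u_{n-1}|^2$ for all finitely supported $\{u_n\}_{n\ge0}$ with $u_0=0$. A Hardy weight $w$ is optimal if for every Hardy weight $\tilde w$ with $\tilde w_n\ge w_n$ for all $n$, one has $\tilde w=w$. *)

theory Defs
  imports "HOL-Analysis.Analysis"
begin

text \<open>Sequences u = (u_n)_{n \<ge> 0} are functions nat \<Rightarrow> complex; weights w = (w_n)_{n \<ge> 1}
  are functions nat \<Rightarrow> real whose value at 0 is irrelevant.\<close>

definition fin_supp :: "(nat \<Rightarrow> 'a::zero) \<Rightarrow> bool" where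
  "fin_supp u \<longleftrightarrow> finite {n. u n \<noteq> 0}"

definition hardy_weight :: "(nat \<Rightarrow> real) \<Rightarrow> bool" where
  "hardy_weight w \<longleftrightarrow> (\<forall>n\<ge>1. 0 \<le> w n) \<and>
     (\<forall>u::nat \<Rightarrow> complex. fin_supp u \<and> u 0 = 0 \<longrightarrow>
        (\<Sum>n. w (Suc n) * (cmod (u (Suc n)))\<^sup>2) \<le> (\<Sum>n. (cmod (u (Suc n) - u n))\<^sup>2))"

definition optimal_hardy_weight :: "(nat \<Rightarrow> real) \<Rightarrow> bool" where
  "optimal_hardy_weight w \<longleftrightarrow> hardy_weight w \<and>
     (\<forall>w'. hardy_weight w' \<and> (\<forall>n\<ge>1. w n \<le> w' n) \<longrightarrow> (\<forall>n\<ge>1. w' n = w n))"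

end

theory Submission
  imports Defs
begin

text \<open>Pointwise, |u(n) - u(n-1)|^2 splits into w(n) |u(n)|^2, a square, and a difference of
  consecutive boundary terms; for finitely supported u with u(0) = 0 (and g(0) = 0) these
  telescope to zero, which gives the ground state identity, and superharmonicity of g makes w
  nonnegative. For optimality, test a Hardy weight w' \<ge> w on u = g \<xi>_N: the squares in the
  identity become g(n) g(n-1) |\<xi>_N(n) - \<xi>_N(n-1)|^2, so (w'(m) - w(m)) (g(m) \<xi>_N(m))^2 is
  bounded by an energy tending to 0, while \<xi>_N(m) tends to 1.\<close>

definition boundary_term :: "real \<Rightarrow> real \<Rightarrow> 'a::real_inner \<Rightarrow> 'a \<Rightarrow> real" where
  "boundary_term a b x y = (norm x)\<^sup>2 + a / b * (norm y)\<^sup>2 - 2 * inner x y"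

lemma ground_state_identity_step:
  fixes x0 x1 x2 :: "'a::real_inner" and g0 g1 g2 :: real
  assumes "0 < g1" "0 < g2"
  shows "(norm (x1 - x0))\<^sup>2 = (2 * g1 - g0 - g2) / g1 * (norm x1)\<^sup>2
           + (norm (sqrt (g1 / g2) *\<^sub>R x2 - sqrt (g2 / g1) *\<^sub>R x1))\<^sup>2
           + (boundary_term g0 g1 x0 x1 - boundary_term g1 g2 x1 x2)"
proof -
  have "sqrt (g1 / g2) * sqrt (g2 / g1) = 1"
    using assms by (simp flip: real_sqrt_mult)
  then have "(norm (sqrt (g1 / g2) *\<^sub>R x2 - sqrt (g2 / g1) *\<^sub>R x1))\<^sup>2
      = g1 / g2 * (norm x2)\<^sup>2 + g2 / g1 * (norm x1)\<^sup>2 - 2 * inner x1 x2"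
    unfolding power2_norm_eq_inner using assms
    by (simp add: inner_diff inner_commute algebra_simps)
  then show ?thesis
    using assms unfolding boundary_term_def
    by (simp add: power2_norm_eq_inner inner_diff inner_commute field_simps)
qed

lemma sqrt_ratio_cross_square:
  fixes a b x y :: real
  assumes "0 < a" "0 < b"
  shows "(sqrt (a / b) * (b * x) - sqrt (b / a) * (a * y))\<^sup>2 = a * b * (x - y)\<^sup>2"
proof -
  have "sqrt (a / b) * b = sqrt (a * b)" "sqrt (b / a) * a = sqrt (a * b)"
    using assms by (simp_all add: real_sqrt_divide real_sqrt_mult field_simps)
  then have "sqrt (a / b) * (b * x) - sqrt (b / a) * (a * y) = sqrt (a * b) * (x - y)"
    by (metis mult.assoc right_diff_distrib)
  then show ?thesis
    using assms by (simp add: power_mult_distrib)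
qed

lemma fin_supp_vanishes_beyond:
  assumes "fin_supp u"
  obtains M where "\<And>n. M \<le> n \<Longrightarrow> u n = 0"
  using assms unfolding fin_supp_def
  by (metis (mono_tags) finite_nat_set_iff_bounded_le mem_Collect_eq not_less_eq_eq)

lemma suminf_eq_sum_lessThan:
  fixes f :: "nat \<Rightarrow> 'a::{comm_monoid_add, t2_space}"
  assumes "\<And>n. M \<le> n \<Longrightarrow> f n = 0"
  shows "suminf f = (\<Sum>n<M. f n)"
  by (rule suminf_finite) (auto intro: assms)

lemma ground_state_identity:
  fixes g w :: "nat \<Rightarrow> real" and u :: "nat \<Rightarrow> 'a::real_inner"
  assumes g0: "g 0 = 0"
    and gpos: "\<And>n. 1 \<le> n \<Longrightarrow> 0 < g n"
    and w_eq: "\<And>n. 1 \<le> n \<Longrightarrow> w n = (2 * g n - g (n - 1) - g (n + 1)) / g n"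
    and u: "fin_supp u" "u 0 = 0"
  shows "(\<Sum>n. (norm (u (Suc n) - u n))\<^sup>2)
           = (\<Sum>n. w (Suc n) * (norm (u (Suc n)))\<^sup>2)
             + (\<Sum>n. (norm (sqrt (g (n + 1) / g (n + 2)) *\<^sub>R u (n + 2)
                             - sqrt (g (n + 2) / g (n + 1)) *\<^sub>R u (n + 1)))\<^sup>2)"
    (is "suminf ?D = suminf ?W + suminf ?R")
proof -
  define h where "h n = boundary_term (g n) (g (n + 1)) (u n) (u (n + 1))" for n
  have step: "?D n = ?W n + ?R n + (h n - h (Suc n))" for n
    using ground_state_identity_step[of "g (n + 1)" "g (n + 2)" "u (n + 1)" "u n" "g n" "u (n + 2)"]
    by (simp add: h_def gpos w_eq numeral_2_eq_2)
  obtain M where M: "\<And>n. M \<le> n \<Longrightarrow> u n = 0"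
    using fin_supp_vanishes_beyond[OF u(1)] by blast
  have "(\<Sum>n<M. ?D n) = (\<Sum>n<M. ?W n) + (\<Sum>n<M. ?R n) + (h 0 - h M)"
    by (simp add: step sum.distrib sum_lessThan_telescope')
  moreover have "h 0 = 0" "h M = 0"
    by (simp_all add: h_def boundary_term_def g0 u(2) M)
  moreover have "suminf f = (\<Sum>n<M. f n)" if "f \<in> {?D, ?W, ?R}" for f :: "nat \<Rightarrow> real"
    using that by (auto intro!: suminf_eq_sum_lessThan simp: M)
  ultimately show ?thesis
    by simp
qed

lemma hardy_weight_ground_state:
  fixes g w :: "nat \<Rightarrow> real"
  assumes g0: "g 0 = 0"
    and gpos: "\<And>n. 1 \<le> n \<Longrightarrow> 0 < g n"
    and superharm: "\<And>n. 1 \<le> n \<Longrightarrow> 0 \<le> 2 * g n - g (n - 1) - g (n + 1)"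
    and w_eq: "\<And>n. 1 \<le> n \<Longrightarrow> w n = (2 * g n - g (n - 1) - g (n + 1)) / g n"
  shows "hardy_weight w"
  unfolding hardy_weight_def
proof (intro conjI allI impI)
  show "0 \<le> w n" if "1 \<le> n" for n
    unfolding w_eq[OF that] using superharm[OF that] gpos[OF that] by simp
next
  fix u :: "nat \<Rightarrow> complex"
  assume u: "fin_supp u \<and> u 0 = 0"
  then obtain M where M: "\<And>n. M \<le> n \<Longrightarrow> u n = 0"
    using fin_supp_vanishes_beyond by blast
  have "0 \<le> (\<Sum>n. (norm (sqrt (g (n + 1) / g (n + 2)) *\<^sub>R u (n + 2)
                           - sqrt (g (n + 2) / g (n + 1)) *\<^sub>R u (n + 1)))\<^sup>2)"
    by (rule suminf_nonneg, rule summable_finite[of "{..<M}"]) (auto simp: M)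
  then show "(\<Sum>n. w (Suc n) * (cmod (u (Suc n)))\<^sup>2) \<le> (\<Sum>n. (cmod (u (Suc n) - u n))\<^sup>2)"
    using ground_state_identity[OF g0 gpos w_eq, of u] u by simp
qed

lemma hardy_weight_excess_le_energy:
  fixes g w w' \<xi> :: "nat \<Rightarrow> real"
  assumes g0: "g 0 = 0"
    and gpos: "\<And>n. 1 \<le> n \<Longrightarrow> 0 < g n"
    and w_eq: "\<And>n. 1 \<le> n \<Longrightarrow> w n = (2 * g n - g (n - 1) - g (n + 1)) / g n"
    and w': "hardy_weight w'" "\<And>n. 1 \<le> n \<Longrightarrow> w n \<le> w' n"
    and fin: "finite {n. 1 \<le> n \<and> \<xi> n \<noteq> 0}"
    and m: "1 \<le> m"
  shows "(w' m - w m) * (g m * \<xi> m)\<^sup>2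
           \<le> (\<Sum>n. g (n + 2) * g (n + 1) * (\<xi> (n + 2) - \<xi> (n + 1))\<^sup>2)"
proof -
  define u :: "nat \<Rightarrow> complex" where "u n = of_real (g n * \<xi> n)" for n
  have u0: "u 0 = 0"
    by (simp add: u_def g0)
  have "{n. u n \<noteq> 0} \<subseteq> {n. 1 \<le> n \<and> \<xi> n \<noteq> 0}"
    using g0 by (auto simp: u_def Suc_le_eq intro!: gr0I)
  then have u_fin: "fin_supp u"
    unfolding fin_supp_def using fin by (rule finite_subset)
  then obtain M0 where M0: "\<And>n. M0 \<le> n \<Longrightarrow> u n = 0"
    using fin_supp_vanishes_beyond by blast
  define M where "M = M0 + m"
  have M: "u n = 0" if "M \<le> n" for n
    using that M0 by (simp add: M_def)
  have energy: "(norm (sqrt (g (n + 1) / g (n + 2)) *\<^sub>R u (n + 2)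
                   - sqrt (g (n + 2) / g (n + 1)) *\<^sub>R u (n + 1)))\<^sup>2
                = g (n + 2) * g (n + 1) * (\<xi> (n + 2) - \<xi> (n + 1))\<^sup>2" for n
  proof -
    have "(norm (sqrt (g (n + 1) / g (n + 2)) *\<^sub>R u (n + 2)
                   - sqrt (g (n + 2) / g (n + 1)) *\<^sub>R u (n + 1)))\<^sup>2
          = (sqrt (g (n + 1) / g (n + 2)) * (g (n + 2) * \<xi> (n + 2))
               - sqrt (g (n + 2) / g (n + 1)) * (g (n + 1) * \<xi> (n + 1)))\<^sup>2"
      by (simp add: u_def scaleR_conv_of_real flip: of_real_mult of_real_diff)
    then show ?thesis
      using sqrt_ratio_cross_square[of "g (n + 1)" "g (n + 2)"] gpos by (simp add: mult.commute)
  qed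
  have "(\<Sum>n. w' (Suc n) * (norm (u (Suc n)))\<^sup>2) \<le> (\<Sum>n. (norm (u (Suc n) - u n))\<^sup>2)"
    using w'(1) u_fin u0 unfolding hardy_weight_def by blast
  also have "\<dots> = (\<Sum>n. w (Suc n) * (norm (u (Suc n)))\<^sup>2)
                   + (\<Sum>n. g (n + 2) * g (n + 1) * (\<xi> (n + 2) - \<xi> (n + 1))\<^sup>2)"
    using ground_state_identity[OF g0 gpos w_eq u_fin u0] by (simp only: energy)
  finally have "(\<Sum>n<M. (w' (Suc n) - w (Suc n)) * (norm (u (Suc n)))\<^sup>2)
               \<le> (\<Sum>n. g (n + 2) * g (n + 1) * (\<xi> (n + 2) - \<xi> (n + 1))\<^sup>2)"
    using suminf_eq_sum_lessThan[of M "\<lambda>n. w (Suc n) * (norm (u (Suc n)))\<^sup>2"]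
      suminf_eq_sum_lessThan[of M "\<lambda>n. w' (Suc n) * (norm (u (Suc n)))\<^sup>2"]
    by (simp add: M left_diff_distrib sum_subtractf)
  moreover obtain k where k: "m = Suc k"
    using m by (cases m) auto
  then have "(w' m - w m) * (norm (u m))\<^sup>2
               \<le> (\<Sum>n<M. (w' (Suc n) - w (Suc n)) * (norm (u (Suc n)))\<^sup>2)"
    unfolding k by (intro member_le_sum) (auto simp: M_def k w'(2))
  ultimately show ?thesis
    unfolding u_def norm_of_real power2_abs by linarith
qed

lemma optimal_hardy_weight_ground_state:
  fixes g w :: "nat \<Rightarrow> real" and \<xi> :: "nat \<Rightarrow> nat \<Rightarrow> real"
  assumes g0: "g 0 = 0"
    and gpos: "\<And>n. 1 \<le> n \<Longrightarrow> 0 < g n"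
    and superharm: "\<And>n. 1 \<le> n \<Longrightarrow> 0 \<le> 2 * g n - g (n - 1) - g (n + 1)"
    and w_eq: "\<And>n. 1 \<le> n \<Longrightarrow> w n = (2 * g n - g (n - 1) - g (n + 1)) / g n"
    and fin: "\<And>N. 1 \<le> N \<Longrightarrow> finite {n. 1 \<le> n \<and> \<xi> N n \<noteq> 0}"
    and to_one: "\<And>n. 1 \<le> n \<Longrightarrow> (\<lambda>N. \<xi> N n) \<longlonglongrightarrow> 1"
    and energy: "(\<lambda>N. \<Sum>n. g (n + 2) * g (n + 1) * (\<xi> N (n + 2) - \<xi> N (n + 1))\<^sup>2) \<longlonglongrightarrow> 0"
  shows "optimal_hardy_weight w"
  unfolding optimal_hardy_weight_def
proof (intro conjI allI impI)
  show "hardy_weight w"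
    using g0 gpos superharm w_eq by (rule hardy_weight_ground_state)
  fix w' :: "nat \<Rightarrow> real" and m :: nat
  assume w': "hardy_weight w' \<and> (\<forall>n\<ge>1. w n \<le> w' n)" and m: "1 \<le> m"
  have "(\<lambda>N. (w' m - w m) * (g m * \<xi> N m)\<^sup>2) \<longlonglongrightarrow> (w' m - w m) * (g m * 1)\<^sup>2"
    using to_one[OF m] by (intro tendsto_intros)
  then have "(w' m - w m) * (g m)\<^sup>2 \<le> 0"
    using LIMSEQ_le[OF _ energy] hardy_weight_excess_le_energy[OF g0 gpos w_eq _ _ fin m] w'
    by fastforce
  then show "w' m = w m"
    using gpos[OF m] w' m by (simp add: mult_le_0_iff antisym)
qed

theorem theorem4p3:
  fixes g w :: "nat \<Rightarrow> real"
  assumes g0: "g 0 = 0"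
    and gpos: "\<forall>n\<ge>1. 0 < g n"
    and superharm: "\<forall>n\<ge>1. 2 * g n - g (n - 1) - g (n + 1) \<ge> 0"
    and w_def: "\<forall>n\<ge>1. w n = (2 * g n - g (n - 1) - g (n + 1)) / g n"
  shows "(\<forall>u::nat \<Rightarrow> complex. fin_supp u \<and> u 0 = 0 \<longrightarrow>
           (\<Sum>n. (cmod (u (Suc n) - u n))\<^sup>2)
             = (\<Sum>n. w (Suc n) * (cmod (u (Suc n)))\<^sup>2)
               + (\<Sum>n. (cmod (complex_of_real (sqrt (g (n + 1) / g (n + 2))) * u (n + 2)
                          - complex_of_real (sqrt (g (n + 2) / g (n + 1))) * u (n + 1)))\<^sup>2))
       \<and> (\<forall>u::nat \<Rightarrow> complex. fin_supp u \<and> u 0 = 0 \<longrightarrow>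
           (\<Sum>n. w (Suc n) * (cmod (u (Suc n)))\<^sup>2) \<le> (\<Sum>n. (cmod (u (Suc n) - u n))\<^sup>2))
       \<and> ((\<exists>\<xi> :: nat \<Rightarrow> nat \<Rightarrow> real.
              (\<forall>N\<ge>1. finite {n. n \<ge> 1 \<and> \<xi> N n \<noteq> 0})
            \<and> (\<forall>N\<ge>1. \<forall>n\<ge>1. \<xi> N n \<le> \<xi> (Suc N) n)
            \<and> (\<forall>n\<ge>1. (\<lambda>N. \<xi> N n) \<longlonglongrightarrow> 1)
            \<and> (\<lambda>N. \<Sum>n. g (n + 2) * g (n + 1) * (\<xi> N (n + 2) - \<xi> N (n + 1))\<^sup>2) \<longlonglongrightarrow> 0)
          \<longrightarrow> optimal_hardy_weight w)"
proof -
  note hyps = g0 gpos[rule_format] w_def[rule_format]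
  note superharm_hyps = g0 gpos[rule_format] superharm[rule_format] w_def[rule_format]
  have identity: "(\<Sum>n. (cmod (u (Suc n) - u n))\<^sup>2)
             = (\<Sum>n. w (Suc n) * (cmod (u (Suc n)))\<^sup>2)
               + (\<Sum>n. (cmod (complex_of_real (sqrt (g (n + 1) / g (n + 2))) * u (n + 2)
                          - complex_of_real (sqrt (g (n + 2) / g (n + 1))) * u (n + 1)))\<^sup>2)"
    if "fin_supp u" "u 0 = 0" for u :: "nat \<Rightarrow> complex"
    using ground_state_identity[OF hyps that] by (simp add: scaleR_conv_of_real)
  have "hardy_weight w"
    using superharm_hyps by (rule hardy_weight_ground_state)
  moreover have "optimal_hardy_weight w"
    if "\<forall>N\<ge>1. finite {n. n \<ge> 1 \<and> \<xi> N n \<noteq> 0}" "\<forall>n\<ge>1. (\<lambda>N. \<xi> N n) \<longlonglongrightarrow> 1"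
      "(\<lambda>N. \<Sum>n. g (n + 2) * g (n + 1) * (\<xi> N (n + 2) - \<xi> N (n + 1))\<^sup>2) \<longlonglongrightarrow> 0"
    for \<xi> :: "nat \<Rightarrow> nat \<Rightarrow> real"
    using superharm_hyps that[rule_format] by (rule optimal_hardy_weight_ground_state)
  ultimately show ?thesis
    using identity unfolding hardy_weight_def by blast
qed

end
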